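(* Let $\mathcal{M}=(S,s_I,\mathit{Act},\mathcal{P},\mathit{AP},\mathcal{L})$ be a Markov decision process (in the setting of the paper, the product of the robot MDP with a deterministic Rabin automaton for an LTL specification $\varphi$, with all states of end components made absorbing), let $B\subseteq S$ be the set of states in accepting end components, let $S_r$ be the set of states not in $B$ with nonzero probability of reaching $B$, let $\sigma_h$ be a memoryless randomized (human) strategy, and let $\beta\in[0,1]$. Then the shared control synthesis problem $$\min_{\sigma_{ha}}\ \max_{s\in S,\alpha\in\mathit{Act}}|\sigma_h(s,\alpha)-\sigma_{ha}(s,\alpha)|\quad\text{subject to}\quad \mathbb{P}_{\mathcal{M}^{\sigma_{ha}}}(s_I\models\varphi)\ge\beta$$ can be formulated as the following nonlinear program in the variables $x(s,\alpha)\in[0,\infty)$ for $s\in S_r,\alpha\in\mathit{Act}$, $x(s)\in[0,1]$ for $s\in B$, and $\hat\delta\in[0,1]$: minimize $\hat\delta$ subject to (i) for all $s\in S_r$: $\sum_{\alpha\in\mathit{Act}}x(s,\alpha)=\sum_{s'\in S_r}\sum_{\alpha\in\mathit{Act}}\mathcal{P}(s',\alpha,s)\,x(s',\alpha)+\alpha_s$; (ii) for all $s\in B$: $x(s)=\sum_{s'\in S_r}\sum_{\alpha\in\mathit{Act}}\mathcal{P}(s',\alpha,s)\,x(s',\alpha)+\alpha_s$; (iii) $\sum_{s\in B}x(s)\ge\beta$; (iv) for all $s\in S_r$ and $\alpha\in\mathit{Act}$: $\big|x(s,\alpha)-\sum_{\alpha'\in\mathit{Act}}x(s,\alpha')\,\sigma_h(s,\alpha)\big|\le\hat\delta\sum_{\alpha'\in\mathit{Act}}x(s,\alpha')$;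 where $\alpha_s=1$ if $s=s_I$ and $\alpha_s=0$ otherwise, and the repaired strategy is recovered as $\sigma_{ha}(s,\alpha)=x(s,\alpha)/\sum_{\alpha'\in\mathit{Act}}x(s,\alpha')$.
   Context: An MDP has finite state set $S$, initial state $s_I$, finite action set $\mathit{Act}$, transition function $\mathcal{P}:S\times\mathit{Act}\to\mathrm{Distr}(S)$, atomic propositions $\mathit{AP}$ and labeling $\mathcal{L}:S\to 2^{\mathit{AP}}$. A memoryless randomized strategy is $\sigma:S\to\mathrm{Distr}(\mathit{Act})$; $\mathcal{M}^\sigma$ denotes the induced Markov chain with $\mathcal{P}^\sigma(s,s')=\sum_\alpha\sigma(s,\alpha)\mathcal{P}(s,\alpha,s')$, and $\mathbb{P}_{\mathcal{M}^\sigma}(s_I\models\varphi)$ is the probability that a path from $s_I$ satisfies the LTL formula $\varphi$ (equivalently, in the product MDP, reaches the accepting end component states $B$). The variable $x(s,\alpha)$ represents the occupancy measure (expected number of times action $\alpha$ is taken in state $s$) and $x(s)$ the probability of reaching $s\in B$. It is assumed there exists a strategy satisfying $\varphi$ with probability at least $\beta$, and that all states are reachable. *)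

theory Defs
  imports Complex_Main
begin

text \<open>An MDP over a finite state type 's and finite action type 'a; the transition
  function is P s a s' (probability of moving from s to s' under action a).
  Every action is enabled in every state.\<close>

definition is_mdp :: "('s::finite \<Rightarrow> 'a::finite \<Rightarrow> 's \<Rightarrow> real) \<Rightarrow> bool" where
  "is_mdp P \<longleftrightarrow> (\<forall>s a s'. 0 \<le> P s a s') \<and> (\<forall>s a. (\<Sum>s'\<in>UNIV. P s a s') = 1)"

definition is_strategy :: "('s::finite \<Rightarrow> 'a::finite \<Rightarrow> real) \<Rightarrow> bool" where
  "is_strategy \<sigma> \<longleftrightarrow> (\<forall>s a. 0 \<le> \<sigma> s a) \<and> (\<forall>s. (\<Sum>a\<in>UNIV. \<sigma> s a) = 1)"

definition induced :: "('s::finite \<Rightarrow> 'a::finite \<Rightarrow> 's \<Rightarrow> real) \<Rightarrow> ('s \<Rightarrow> 'a \<Rightarrow> real) \<Rightarrow> 's \<Rightarrow> 's \<Rightarrow> real" where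
  "induced P \<sigma> s s' = (\<Sum>a\<in>UNIV. \<sigma> s a * P s a s')"

fun reach_n :: "('s::finite \<Rightarrow> 'a::finite \<Rightarrow> 's \<Rightarrow> real) \<Rightarrow> 's set \<Rightarrow> ('s \<Rightarrow> 'a \<Rightarrow> real) \<Rightarrow> nat \<Rightarrow> 's \<Rightarrow> real" where
  "reach_n P B \<sigma> 0 s = (if s \<in> B then 1 else 0)"
| "reach_n P B \<sigma> (Suc n) s =
     (if s \<in> B then 1 else (\<Sum>s'\<in>UNIV. induced P \<sigma> s s' * reach_n P B \<sigma> n s'))"

text \<open>Probability, in M^\<sigma>, of eventually reaching B from s (limit of the
  nondecreasing bounded step-bounded reachability probabilities).\<close>
definition reach_prob :: "('s::finite \<Rightarrow> 'a::finite \<Rightarrow> 's \<Rightarrow> real) \<Rightarrow> 's set \<Rightarrow> ('s \<Rightarrow> 'a \<Rightarrow> real) \<Rightarrow> 's \<Rightarrow> real" where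
  "reach_prob P B \<sigma> s = (SUP n. reach_n P B \<sigma> n s)"

definition S_r :: "('s::finite \<Rightarrow> 'a::finite \<Rightarrow> 's \<Rightarrow> real) \<Rightarrow> 's set \<Rightarrow> 's set" where
  "S_r P B = {s. s \<notin> B \<and> (\<exists>\<sigma>. is_strategy \<sigma> \<and> 0 < reach_prob P B \<sigma> s)}"

definition deviation :: "('s::finite \<Rightarrow> 'a::finite \<Rightarrow> real) \<Rightarrow> ('s \<Rightarrow> 'a \<Rightarrow> real) \<Rightarrow> real" where
  "deviation \<sigma>h \<sigma> = Max (range (\<lambda>(s, a). \<bar>\<sigma>h s a - \<sigma> s a\<bar>))"

definition inflow :: "('s::finite \<Rightarrow> 'a::finite \<Rightarrow> 's \<Rightarrow> real) \<Rightarrow> 's set \<Rightarrow> 's \<Rightarrow> ('s \<Rightarrow> 'a \<Rightarrow> real) \<Rightarrow> 's \<Rightarrow> real" where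
  "inflow P B sI x s =
     (\<Sum>s'\<in>S_r P B. \<Sum>a\<in>UNIV. P s' a s * x s' a) + (if s = sI then 1 else 0)"

definition nlp_feasible ::
  "('s::finite \<Rightarrow> 'a::finite \<Rightarrow> 's \<Rightarrow> real) \<Rightarrow> 's \<Rightarrow> 's set \<Rightarrow> ('s \<Rightarrow> 'a \<Rightarrow> real) \<Rightarrow> real
    \<Rightarrow> ('s \<Rightarrow> 'a \<Rightarrow> real) \<Rightarrow> ('s \<Rightarrow> real) \<Rightarrow> real \<Rightarrow> bool" where
  "nlp_feasible P sI B \<sigma>h \<beta> x xB \<delta> \<longleftrightarrow>
     0 \<le> \<delta> \<and> \<delta> \<le> 1 \<and>
     (\<forall>s\<in>S_r P B. \<forall>a. 0 \<le> x s a) \<and>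
     (\<forall>s\<in>B. 0 \<le> xB s \<and> xB s \<le> 1) \<and>
     (\<forall>s\<in>S_r P B. (\<Sum>a\<in>UNIV. x s a) = inflow P B sI x s) \<and>
     (\<forall>s\<in>B. xB s = inflow P B sI x s) \<and>
     (\<Sum>s\<in>B. xB s) \<ge> \<beta> \<and>
     (\<forall>s\<in>S_r P B. \<forall>a. \<bar>x s a - (\<Sum>a'\<in>UNIV. x s a') * \<sigma>h s a\<bar> \<le> \<delta> * (\<Sum>a'\<in>UNIV. x s a'))"

text \<open>Strategy recovered from an NLP solution; at states of S_r not visited, and
  outside S_r (where the choice does not influence the reachability of B), the
  human strategy is kept.\<close>
definition recovered :: "('s::finite \<Rightarrow> 'a::finite \<Rightarrow> 's \<Rightarrow> real) \<Rightarrow> 's set \<Rightarrow> ('s \<Rightarrow> 'a \<Rightarrow> real)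
    \<Rightarrow> ('s \<Rightarrow> 'a \<Rightarrow> real) \<Rightarrow> 's \<Rightarrow> 'a \<Rightarrow> real" where
  "recovered P B \<sigma>h x s a =
     (if s \<in> S_r P B \<and> (\<Sum>a'\<in>UNIV. x s a') > 0 then x s a / (\<Sum>a'\<in>UNIV. x s a') else \<sigma>h s a)"

end

theory Submission
  imports Defs
begin

(* Soundness: normalising a feasible x at every state of S_r gives a strategy whose deviation from
   the human strategy is at most delta, and for which the NLP constraints are flow equations of the
   induced chain.  These bound the mass collected in B by the probability of reaching B: otherwise
   the potential sum_s y(s) * P(reach B within n steps from s), y(s) = sum_a x(s,a), would grow
   linearly in n although it is bounded by sum_s y(s).
   Completeness: a feasible strategy is first perturbed by at most epsilon so that B is reached with
   positive probability from every state of S_r.  The induced chain restricted to S_r is then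
   transient, so the expected numbers of visits to the states of S_r are finite; together with the
   strategy they form a feasible point of the NLP whose delta is the deviation of the perturbed
   strategy. *)

lemma sum_UNIV_split_Compl:
  fixes f :: "'s::finite \<Rightarrow> 'b::comm_monoid_add"
  shows "sum f UNIV = sum f T + sum f (- T)"
  by (metis Compl_eq_Diff_UNIV add.commute finite subset_UNIV sum.subset_diff)

lemma nonpos_if_bounded_increments:
  fixes D :: "nat \<Rightarrow> real"
  assumes step: "\<And>n. D n + c \<le> D (Suc n)" and bounded: "\<And>n. D n \<le> Y"
  shows "c \<le> 0"
proof (rule ccontr)
  assume "\<not> c \<le> 0"
  have linear: "D 0 + real n * c \<le> D n" for n
  proof (induction n)
    case (Suc n)
    then show ?case
      using step[of n] by (simp add: algebra_simps)
  qed simp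
  obtain n where "Y - D 0 < real n * c"
    using reals_Archimedean3 \<open>\<not> c \<le> 0\<close> by (meson not_le)
  then show False
    using linear[of n] bounded[of n] by linarith
qed

lemma Inf_eq_if_mutually_approximating:
  fixes A C :: "real set"
  assumes "A \<noteq> {}" "bdd_below A" "bdd_below C"
    and approx_A: "\<And>a \<epsilon>. a \<in> A \<Longrightarrow> 0 < \<epsilon> \<Longrightarrow> \<exists>c\<in>C. c \<le> a + \<epsilon>"
    and approx_C: "\<And>c. c \<in> C \<Longrightarrow> \<exists>a\<in>A. a \<le> c"
  shows "Inf A = Inf C"
proof (rule antisym)
  have "C \<noteq> {}"
    using \<open>A \<noteq> {}\<close> approx_A[of _ 1] by fastforce
  then show "Inf A \<le> Inf C"
    using approx_C cInf_lower[OF _ \<open>bdd_below A\<close>] by (meson cInf_greatest order_trans)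
  show "Inf C \<le> Inf A"
  proof (rule cInf_greatest[OF \<open>A \<noteq> {}\<close>])
    fix a assume "a \<in> A"
    show "Inf C \<le> a"
    proof (rule field_le_epsilon)
      fix \<epsilon> :: real assume "0 < \<epsilon>"
      then show "Inf C \<le> a + \<epsilon>"
        using approx_A[OF \<open>a \<in> A\<close>] cInf_lower[OF _ \<open>bdd_below C\<close>] by (meson order_trans)
    qed
  qed
qed

section \<open>Reachability under memoryless strategies\<close>

lemma strategy_le_one:
  assumes "is_strategy \<sigma>"
  shows "\<sigma> s a \<le> 1"
proof -
  have "\<sigma> s a \<le> (\<Sum>b\<in>UNIV. \<sigma> s b)"
    by (rule member_le_sum) (use assms in \<open>auto simp: is_strategy_def\<close>)
  then show ?thesis
    using assms by (simp add: is_strategy_def)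
qed

lemma induced_nonneg:
  assumes "is_mdp P" "is_strategy \<sigma>"
  shows "0 \<le> induced P \<sigma> s t"
  using assms unfolding induced_def is_mdp_def is_strategy_def by (intro sum_nonneg) auto

lemma induced_sum_UNIV:
  assumes "is_mdp P" "is_strategy \<sigma>"
  shows "(\<Sum>t\<in>UNIV. induced P \<sigma> s t) = 1"
proof -
  have "(\<Sum>t\<in>UNIV. induced P \<sigma> s t) = (\<Sum>a\<in>UNIV. \<sigma> s a * (\<Sum>t\<in>UNIV. P s a t))"
    unfolding induced_def by (subst sum.swap) (simp add: sum_distrib_left)
  also have "\<dots> = 1"
    using assms by (simp add: is_mdp_def is_strategy_def)
  finally show ?thesis .
qed

lemma induced_sum_le_one:
  assumes "is_mdp P" "is_strategy \<sigma>"
  shows "(\<Sum>t\<in>T. induced P \<sigma> s t) \<le> 1"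
proof -
  have "(\<Sum>t\<in>T. induced P \<sigma> s t) \<le> (\<Sum>t\<in>UNIV. induced P \<sigma> s t)"
    by (rule sum_mono2) (auto intro: induced_nonneg[OF assms])
  then show ?thesis
    using induced_sum_UNIV[OF assms] by simp
qed

lemma reach_n_in_B: "s \<in> B \<Longrightarrow> reach_n P B \<sigma> n s = 1"
  by (cases n) auto

lemma reach_n_bounds:
  assumes "is_mdp P" "is_strategy \<sigma>"
  shows "0 \<le> reach_n P B \<sigma> n s \<and> reach_n P B \<sigma> n s \<le> 1"
proof (induction n arbitrary: s)
  case 0
  then show ?case by simp
next
  case (Suc n)
  have "(\<Sum>t\<in>UNIV. induced P \<sigma> s t * reach_n P B \<sigma> n t) \<le> (\<Sum>t\<in>UNIV. induced P \<sigma> s t)"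
    by (intro sum_mono mult_right_le_one_le) (auto simp: Suc induced_nonneg[OF assms])
  moreover have "0 \<le> (\<Sum>t\<in>UNIV. induced P \<sigma> s t * reach_n P B \<sigma> n t)"
    by (intro sum_nonneg mult_nonneg_nonneg) (auto simp: Suc induced_nonneg[OF assms])
  ultimately show ?case
    using induced_sum_UNIV[OF assms] by auto
qed

lemma reach_n_le_reach_prob:
  assumes "is_mdp P" "is_strategy \<sigma>"
  shows "reach_n P B \<sigma> n s \<le> reach_prob P B \<sigma> s"
  unfolding reach_prob_def
  by (rule cSUP_upper) (use reach_n_bounds[OF assms] in \<open>auto intro!: bdd_aboveI[of _ 1]\<close>)

lemma reach_prob_bounds:
  assumes "is_mdp P" "is_strategy \<sigma>"
  shows "0 \<le> reach_prob P B \<sigma> s \<and> reach_prob P B \<sigma> s \<le> 1"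
proof
  show "0 \<le> reach_prob P B \<sigma> s"
    using reach_n_le_reach_prob[OF assms, of B 0 s] reach_n_bounds[OF assms, of B 0 s] by linarith
  show "reach_prob P B \<sigma> s \<le> 1"
    unfolding reach_prob_def by (rule cSUP_least) (use reach_n_bounds[OF assms] in auto)
qed

lemma reach_prob_eq_0_iff:
  assumes "is_mdp P" "is_strategy \<sigma>"
  shows "reach_prob P B \<sigma> s = 0 \<longleftrightarrow> (\<forall>n. reach_n P B \<sigma> n s = 0)"
proof
  assume "reach_prob P B \<sigma> s = 0"
  then show "\<forall>n. reach_n P B \<sigma> n s = 0"
    using reach_n_le_reach_prob[OF assms] reach_n_bounds[OF assms] by (metis order_antisym)
qed (simp add: reach_prob_def)

lemma S_r_not_in_B: "s \<in> S_r P B \<Longrightarrow> s \<notin> B"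
  by (simp add: S_r_def)

lemma reach_n_outside_S_r:
  assumes "is_mdp P" "is_strategy \<sigma>" "t \<notin> S_r P B" "t \<notin> B"
  shows "reach_n P B \<sigma> n t = 0"
proof -
  have "reach_prob P B \<sigma> t = 0"
    using assms reach_prob_bounds[OF assms(1,2), of B t] by (auto simp: S_r_def)
  then show ?thesis
    using reach_prob_eq_0_iff[OF assms(1,2)] by blast
qed

lemma reach_n_mono_strategy:
  assumes mdp: "is_mdp P" and strat: "is_strategy \<sigma>" and strat': "is_strategy \<sigma>'"
    and agree: "\<And>s. s \<notin> B \<Longrightarrow> reach_prob P B \<sigma> s \<noteq> 0 \<Longrightarrow> \<sigma>' s = \<sigma> s"
  shows "reach_n P B \<sigma> n s \<le> reach_n P B \<sigma>' n s"
proof (induction n arbitrary: s)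
  case 0
  then show ?case by simp
next
  case (Suc n)
  show ?case
  proof (cases "s \<notin> B \<and> reach_prob P B \<sigma> s \<noteq> 0")
    case True
    then have "induced P \<sigma>' s = induced P \<sigma> s"
      using agree unfolding induced_def by auto
    moreover have "(\<Sum>t\<in>UNIV. induced P \<sigma> s t * reach_n P B \<sigma> n t)
        \<le> (\<Sum>t\<in>UNIV. induced P \<sigma> s t * reach_n P B \<sigma>' n t)"
      by (intro sum_mono mult_left_mono Suc.IH induced_nonneg[OF mdp strat])
    ultimately show ?thesis
      using True by simp
  next
    case False
    then have "s \<in> B \<or> reach_n P B \<sigma> (Suc n) s = 0"
      using reach_prob_eq_0_iff[OF mdp strat] by blast
    then show ?thesis
      using reach_n_bounds[OF mdp strat', of B "Suc n" s] by auto
  qed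
qed

lemma reach_prob_mono_strategy:
  assumes mdp: "is_mdp P" and strat: "is_strategy \<sigma>" and strat': "is_strategy \<sigma>'"
    and agree: "\<And>s. s \<notin> B \<Longrightarrow> reach_prob P B \<sigma> s \<noteq> 0 \<Longrightarrow> \<sigma>' s = \<sigma> s"
  shows "reach_prob P B \<sigma> s \<le> reach_prob P B \<sigma>' s"
  unfolding reach_prob_def[of P B \<sigma>]
proof (rule cSUP_least)
  show "reach_n P B \<sigma> n s \<le> reach_prob P B \<sigma>' s" for n
    using reach_n_mono_strategy[OF assms] reach_n_le_reach_prob[OF mdp strat'] by (rule order_trans)
qed simp

lemma reach_n_eq_0_on_closed:
  assumes mdp: "is_mdp P" and strat: "is_strategy \<sigma>"
    and closed: "\<And>s a t. s \<in> V \<Longrightarrow> 0 < P s a t \<Longrightarrow> t \<in> V" and VB: "V \<inter> B = {}"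
    and s: "s \<in> V"
  shows "reach_n P B \<sigma> n s = 0"
  using s
proof (induction n arbitrary: s)
  case 0
  then show ?case
    using VB by auto
next
  case (Suc n)
  have zero_terms: "induced P \<sigma> s t * reach_n P B \<sigma> n t = 0" for t
  proof (cases "t \<in> V")
    case True
    then show ?thesis
      using Suc.IH by simp
  next
    case False
    then have "P s a t = 0" for a
      using closed[OF Suc.prems] mdp by (metis is_mdp_def order_neq_le_trans)
    then show ?thesis
      unfolding induced_def by simp
  qed
  have "s \<notin> B"
    using Suc.prems VB by auto
  then show ?case
    by (simp add: zero_terms)
qed

lemma reach_prob_eq_0_successor:
  assumes mdp: "is_mdp P" and strat: "is_strategy \<sigma>"
    and s: "s \<notin> B" "reach_prob P B \<sigma> s = 0" and pos: "0 < \<sigma> s a" "0 < P s a t"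
  shows "t \<notin> B \<and> reach_prob P B \<sigma> t = 0"
proof -
  have "\<sigma> s a * P s a t \<le> induced P \<sigma> s t"
    unfolding induced_def
    by (rule member_le_sum) (use strat mdp in \<open>auto simp: is_strategy_def is_mdp_def\<close>)
  then have induced_pos: "0 < induced P \<sigma> s t"
    using mult_pos_pos[OF pos] by linarith
  have t_zero: "reach_n P B \<sigma> n t = 0" for n
  proof -
    have "reach_n P B \<sigma> (Suc n) s = 0"
      using s reach_prob_eq_0_iff[OF mdp strat, of B s] by blast
    then have "(\<Sum>u\<in>UNIV. induced P \<sigma> s u * reach_n P B \<sigma> n u) = 0"
      using s by simp
    then have "induced P \<sigma> s t * reach_n P B \<sigma> n t = 0"
      by (subst (asm) sum_nonneg_eq_0_iff)
         (auto intro!: mult_nonneg_nonneg induced_nonneg[OF mdp strat] simp: reach_n_bounds[OF mdp strat])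
    then show ?thesis
      using induced_pos by simp
  qed
  then show ?thesis
    using t_zero[of 0] reach_prob_eq_0_iff[OF mdp strat, of B t] by auto
qed

lemma reach_prob_pos_on_S_r_if_mixed:
  assumes mdp: "is_mdp P" and strat: "is_strategy \<sigma>"
    and mixed: "\<And>s a. s \<notin> B \<Longrightarrow> reach_prob P B \<sigma> s = 0 \<Longrightarrow> 0 < \<sigma> s a"
    and s: "s \<in> S_r P B"
  shows "0 < reach_prob P B \<sigma> s"
proof -
  define V where "V = {s. s \<notin> B \<and> reach_prob P B \<sigma> s = 0}"
  have closed: "t \<in> V" if "s \<in> V" "0 < P s a t" for s a t
  proof -
    have "s \<notin> B" "reach_prob P B \<sigma> s = 0"
      using that(1) by (auto simp: V_def)
    then show ?thesis
      using reach_prob_eq_0_successor[OF mdp strat _ _ mixed that(2)] by (simp add: V_def)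
  qed
  obtain \<rho> where \<rho>: "is_strategy \<rho>" "0 < reach_prob P B \<rho> s"
    using s by (auto simp: S_r_def)
  then obtain n where "reach_n P B \<rho> n s \<noteq> 0"
    using reach_prob_eq_0_iff[OF mdp \<rho>(1)] by force
  have "s \<notin> V"
  proof
    assume "s \<in> V"
    moreover have "V \<inter> B = {}"
      by (auto simp: V_def)
    ultimately have "reach_n P B \<rho> n s = 0"
      using reach_n_eq_0_on_closed[OF mdp \<rho>(1), of V B s n] closed by blast
    with \<open>reach_n P B \<rho> n s \<noteq> 0\<close> show False ..
  qed
  then show ?thesis
    using s reach_prob_bounds[OF mdp strat, of B s] by (auto simp: V_def S_r_def)
qed

definition mix_uniform :: "real \<Rightarrow> 's set \<Rightarrow> ('s \<Rightarrow> 'a::finite \<Rightarrow> real) \<Rightarrow> 's \<Rightarrow> 'a \<Rightarrow> real" where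
  "mix_uniform \<epsilon> Z \<sigma> s a = (if s \<in> Z then (1 - \<epsilon>) * \<sigma> s a + \<epsilon> / card (UNIV :: 'a set) else \<sigma> s a)"

lemma mix_uniform_strategy:
  assumes strat: "is_strategy \<sigma>" and \<epsilon>: "0 \<le> \<epsilon>" "\<epsilon> \<le> 1"
  shows "is_strategy (mix_uniform \<epsilon> Z \<sigma>)"
  unfolding is_strategy_def
proof safe
  show "0 \<le> mix_uniform \<epsilon> Z \<sigma> s a" for s a
    using strat \<epsilon> by (simp add: is_strategy_def mix_uniform_def)
  show "(\<Sum>a\<in>UNIV. mix_uniform \<epsilon> Z \<sigma> s a) = 1" for s
  proof (cases "s \<in> Z")
    case True
    then have "(\<Sum>a\<in>UNIV. mix_uniform \<epsilon> Z \<sigma> s a) = (1 - \<epsilon>) * (\<Sum>a\<in>UNIV. \<sigma> s a) + \<epsilon>"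
      by (simp add: mix_uniform_def sum.distrib sum_distrib_left[symmetric])
    then show ?thesis
      using strat by (simp add: is_strategy_def)
  qed (use strat in \<open>simp add: is_strategy_def mix_uniform_def\<close>)
qed

lemma mix_uniform_pos:
  fixes \<sigma> :: "'s::finite \<Rightarrow> 'a::finite \<Rightarrow> real"
  assumes "is_strategy \<sigma>" "0 < \<epsilon>" "\<epsilon> \<le> 1" "s \<in> Z"
  shows "0 < mix_uniform \<epsilon> Z \<sigma> s a"
proof -
  have "0 \<le> (1 - \<epsilon>) * \<sigma> s a"
    using assms by (simp add: is_strategy_def)
  moreover have "0 < \<epsilon> / real (card (UNIV :: 'a set))"
    using assms(2) by (simp add: card_gt_0_iff)
  ultimately show ?thesis
    using assms(4) by (simp add: mix_uniform_def)
qed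

lemma mix_uniform_close:
  fixes \<sigma> :: "'s::finite \<Rightarrow> 'a::finite \<Rightarrow> real"
  assumes "is_strategy \<sigma>" "0 \<le> \<epsilon>"
  shows "\<bar>mix_uniform \<epsilon> Z \<sigma> s a - \<sigma> s a\<bar> \<le> \<epsilon>"
proof (cases "s \<in> Z")
  case True
  have "0 \<le> \<sigma> s a" "\<sigma> s a \<le> 1"
    using assms strategy_le_one by (auto simp: is_strategy_def)
  moreover have "0 \<le> 1 / real (card (UNIV :: 'a set))" "1 / real (card (UNIV :: 'a set)) \<le> 1"
    by (auto simp: divide_le_eq)
  ultimately have "\<bar>1 / real (card (UNIV :: 'a set)) - \<sigma> s a\<bar> \<le> 1"
    by linarith
  moreover have "mix_uniform \<epsilon> Z \<sigma> s a - \<sigma> s a = \<epsilon> * (1 / real (card (UNIV :: 'a set)) - \<sigma> s a)"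
    using True by (simp add: mix_uniform_def algebra_simps)
  ultimately show ?thesis
    using assms(2) by (simp add: abs_mult mult_left_le)
qed (simp add: mix_uniform_def assms)

lemma exists_close_strategy_reaching_from_S_r:
  assumes mdp: "is_mdp P" and strat: "is_strategy \<sigma>" and \<epsilon>: "0 < \<epsilon>" "\<epsilon> \<le> 1"
  obtains \<sigma>' where "is_strategy \<sigma>'" "\<And>s a. \<bar>\<sigma>' s a - \<sigma> s a\<bar> \<le> \<epsilon>"
    "reach_prob P B \<sigma> sI \<le> reach_prob P B \<sigma>' sI" "\<And>s. s \<in> S_r P B \<Longrightarrow> 0 < reach_prob P B \<sigma>' s"
proof
  (* Changing sigma on Z, where B is never reached, cannot lower any reachability probability;
     being fully mixed on Z, the new strategy leaves no state of S_r trapped away from B. *)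
  define Z where "Z = {s. s \<notin> B \<and> reach_prob P B \<sigma> s = 0}"
  define \<sigma>' where "\<sigma>' = mix_uniform \<epsilon> Z \<sigma>"
  show strat': "is_strategy \<sigma>'"
    unfolding \<sigma>'_def using mix_uniform_strategy[OF strat] \<epsilon> by simp
  show "\<bar>\<sigma>' s a - \<sigma> s a\<bar> \<le> \<epsilon>" for s a
    unfolding \<sigma>'_def using mix_uniform_close[OF strat] \<epsilon> by simp
  have mono: "reach_prob P B \<sigma> s \<le> reach_prob P B \<sigma>' s" for s
    by (rule reach_prob_mono_strategy[OF mdp strat strat']) (auto simp: \<sigma>'_def mix_uniform_def Z_def)
  then show "reach_prob P B \<sigma> sI \<le> reach_prob P B \<sigma>' sI" .
  have "0 < \<sigma>' s a" if "s \<notin> B" "reach_prob P B \<sigma>' s = 0" for s a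
  proof -
    have "s \<in> Z"
      using that mono[of s] reach_prob_bounds[OF mdp strat, of B s] by (auto simp: Z_def)
    then show ?thesis
      unfolding \<sigma>'_def using mix_uniform_pos[OF strat \<epsilon>] by blast
  qed
  then show "0 < reach_prob P B \<sigma>' s" if "s \<in> S_r P B" for s
    using reach_prob_pos_on_S_r_if_mixed[OF mdp strat'] that by blast
qed

section \<open>Strategies recovered from solutions of the program\<close>

lemma deviation_le_iff: "deviation \<sigma>h \<sigma> \<le> d \<longleftrightarrow> (\<forall>s a. \<bar>\<sigma>h s a - \<sigma> s a\<bar> \<le> d)"
  unfolding deviation_def by (subst Max_le_iff) auto

lemma abs_diff_le_deviation: "\<bar>\<sigma>h s a - \<sigma> s a\<bar> \<le> deviation \<sigma>h \<sigma>"
  using deviation_le_iff by blast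

lemma deviation_bounds:
  assumes "is_strategy \<sigma>h" "is_strategy \<sigma>"
  shows "0 \<le> deviation \<sigma>h \<sigma> \<and> deviation \<sigma>h \<sigma> \<le> 1"
proof
  show "0 \<le> deviation \<sigma>h \<sigma>"
    using abs_diff_le_deviation[of \<sigma>h undefined undefined \<sigma>] by linarith
  have "\<bar>\<sigma>h s a - \<sigma> s a\<bar> \<le> 1" for s a
  proof -
    have "0 \<le> \<sigma>h s a" "0 \<le> \<sigma> s a"
      using assms by (auto simp: is_strategy_def)
    then show ?thesis
      using strategy_le_one[OF assms(1), of s a] strategy_le_one[OF assms(2), of s a] by linarith
  qed
  then show "deviation \<sigma>h \<sigma> \<le> 1"
    by (simp add: deviation_le_iff)
qed

lemma deviation_le_add:
  assumes "\<And>s a. \<bar>\<sigma>' s a - \<sigma> s a\<bar> \<le> \<epsilon>"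
  shows "deviation \<sigma>h \<sigma>' \<le> deviation \<sigma>h \<sigma> + \<epsilon>"
  unfolding deviation_le_iff
proof (intro allI)
  fix s a
  show "\<bar>\<sigma>h s a - \<sigma>' s a\<bar> \<le> deviation \<sigma>h \<sigma> + \<epsilon>"
    using abs_diff_le_deviation[of \<sigma>h s a \<sigma>] assms[of s a] by linarith
qed

lemma recovered_strategy:
  assumes hum: "is_strategy \<sigma>h" and x_nonneg: "\<forall>s\<in>S_r P B. \<forall>a. 0 \<le> x s a"
  shows "is_strategy (recovered P B \<sigma>h x)"
  unfolding is_strategy_def
proof safe
  fix s a
  show "0 \<le> recovered P B \<sigma>h x s a"
    using hum x_nonneg unfolding recovered_def is_strategy_def by auto
next
  fix s
  show "(\<Sum>a\<in>UNIV. recovered P B \<sigma>h x s a) = 1"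
  proof (cases "s \<in> S_r P B \<and> (\<Sum>a'\<in>UNIV. x s a') > 0")
    case True
    then show ?thesis
      unfolding recovered_def by (simp add: sum_divide_distrib[symmetric])
  next
    case False
    then have "recovered P B \<sigma>h x s = \<sigma>h s"
      unfolding recovered_def by auto
    then show ?thesis
      using hum unfolding is_strategy_def by simp
  qed
qed

lemma recovered_flow:
  assumes "s \<in> S_r P B" "\<forall>a. 0 \<le> x s a"
  shows "(\<Sum>a\<in>UNIV. P s a t * x s a) = induced P (recovered P B \<sigma>h x) s t * (\<Sum>a\<in>UNIV. x s a)"
proof (cases "(\<Sum>a\<in>UNIV. x s a) > 0")
  case True
  then have "recovered P B \<sigma>h x s a = x s a / (\<Sum>a\<in>UNIV. x s a)" for a
    using assms unfolding recovered_def by auto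
  then have "induced P (recovered P B \<sigma>h x) s t * (\<Sum>a\<in>UNIV. x s a)
      = (\<Sum>a\<in>UNIV. x s a / (\<Sum>a\<in>UNIV. x s a) * P s a t * (\<Sum>a\<in>UNIV. x s a))"
    unfolding induced_def by (simp add: sum_distrib_right)
  also have "\<dots> = (\<Sum>a\<in>UNIV. P s a t * x s a)"
    using True by (intro sum.cong) auto
  finally show ?thesis by simp
next
  case False
  then have "\<forall>a. x s a = 0"
    using assms(2) by (metis antisym not_less sum_nonneg sum_nonneg_eq_0_iff finite UNIV_I)
  then show ?thesis by simp
qed

lemma deviation_recovered_le:
  assumes "nlp_feasible P sI B \<sigma>h \<beta> x xB \<delta>"
  shows "deviation \<sigma>h (recovered P B \<sigma>h x) \<le> \<delta>"
  unfolding deviation_le_iff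
proof (intro allI)
  fix s a
  show "\<bar>\<sigma>h s a - recovered P B \<sigma>h x s a\<bar> \<le> \<delta>"
  proof (cases "s \<in> S_r P B \<and> (\<Sum>a'\<in>UNIV. x s a') > 0")
    case True
    let ?y = "\<Sum>a'\<in>UNIV. x s a'"
    have "\<bar>x s a - ?y * \<sigma>h s a\<bar> \<le> \<delta> * ?y"
      using assms True unfolding nlp_feasible_def by blast
    moreover have "\<bar>\<sigma>h s a - x s a / ?y\<bar> = \<bar>x s a - ?y * \<sigma>h s a\<bar> / ?y"
      using True by (simp add: field_simps abs_div_pos[symmetric] abs_minus_commute)
    ultimately show ?thesis
      using True unfolding recovered_def by (simp add: divide_le_eq)
  next
    case False
    then show ?thesis
      using assms unfolding recovered_def nlp_feasible_def by auto
  qed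
qed

lemma flow_into_B_le_reach_prob:
  fixes P :: "'s::finite \<Rightarrow> 'a::finite \<Rightarrow> 's \<Rightarrow> real"
    and \<sigma> :: "'s \<Rightarrow> 'a \<Rightarrow> real" and S :: "'s set" and y :: "'s \<Rightarrow> real" and sI :: 's
  defines "inflow_S \<equiv> \<lambda>t. (\<Sum>s\<in>S. induced P \<sigma> s t * y s)"
    and "\<alpha> \<equiv> \<lambda>t. if t = sI then 1 else 0"
  assumes mdp: "is_mdp P" and strat: "is_strategy \<sigma>" and SB: "S \<inter> B = {}"
    and y_nonneg: "\<And>s. s \<in> S \<Longrightarrow> 0 \<le> y s"
    and flow_S: "\<And>t. t \<in> S \<Longrightarrow> y t = inflow_S t + \<alpha> t"
    and flow_B: "\<And>t. t \<in> B \<Longrightarrow> z t = inflow_S t + \<alpha> t"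
  shows "(\<Sum>t\<in>B. z t) \<le> reach_prob P B \<sigma> sI"
proof -
  define h where "h n t = reach_n P B \<sigma> n t" for n t
  define D where "D n = (\<Sum>s\<in>S. y s * h n s)" for n
  have h_bounds: "0 \<le> h n t \<and> h n t \<le> 1" for n t
    unfolding h_def by (rule reach_n_bounds[OF mdp strat])
  have step: "D n + ((\<Sum>t\<in>B. z t) - reach_prob P B \<sigma> sI) \<le> D (Suc n)" for n
  proof -
    have "D (Suc n) = (\<Sum>s\<in>S. y s * (\<Sum>t\<in>UNIV. induced P \<sigma> s t * h n t))"
      unfolding D_def h_def using SB by (intro sum.cong) auto
    also have "\<dots> = (\<Sum>t\<in>UNIV. h n t * inflow_S t)"
      unfolding inflow_S_def
      by (simp add: sum_distrib_left sum_distrib_right mult_ac sum.swap[of _ S])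
    finally have "D (Suc n) = (\<Sum>t\<in>UNIV. h n t * inflow_S t)" .
    moreover have "(\<Sum>t\<in>S \<union> B. h n t * inflow_S t) \<le> (\<Sum>t\<in>UNIV. h n t * inflow_S t)"
      unfolding inflow_S_def
      by (rule sum_mono2) (auto intro!: sum_nonneg mult_nonneg_nonneg y_nonneg
                                 induced_nonneg[OF mdp strat] simp: h_bounds)
    moreover have "(\<Sum>t\<in>S \<union> B. h n t * (inflow_S t + \<alpha> t)) = D n + (\<Sum>t\<in>B. z t)"
      using SB by (simp add: sum.union_disjoint D_def flow_S flow_B h_def reach_n_in_B mult_ac)
    moreover have "(\<Sum>t\<in>S \<union> B. h n t * \<alpha> t) \<le> reach_prob P B \<sigma> sI"
    proof -
      have "(\<Sum>t\<in>S \<union> B. h n t * \<alpha> t) \<le> h n sI"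
        unfolding \<alpha>_def using h_bounds[of n sI] by (simp add: if_distrib cong: if_cong)
      then show ?thesis
        unfolding h_def using reach_n_le_reach_prob[OF mdp strat] order_trans by blast
    qed
    ultimately show ?thesis
      by (simp add: distrib_left sum.distrib)
  qed
  have bounded: "D n \<le> (\<Sum>s\<in>S. y s)" for n
    unfolding D_def by (intro sum_mono mult_right_le_one_le) (auto simp: y_nonneg h_bounds)
  show ?thesis
    using nonpos_if_bounded_increments[of D, OF step bounded] by simp
qed

lemma inflow_eq_induced_recovered:
  assumes "\<forall>s\<in>S_r P B. \<forall>a. 0 \<le> x s a"
  shows "inflow P B sI x t
    = (\<Sum>s\<in>S_r P B. induced P (recovered P B \<sigma>h x) s t * (\<Sum>a\<in>UNIV. x s a))
      + (if t = sI then 1 else 0)"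
proof -
  have "(\<Sum>s\<in>S_r P B. \<Sum>a\<in>UNIV. P s a t * x s a)
      = (\<Sum>s\<in>S_r P B. induced P (recovered P B \<sigma>h x) s t * (\<Sum>a\<in>UNIV. x s a))"
    using assms by (intro sum.cong refl recovered_flow) auto
  then show ?thesis
    by (simp add: inflow_def)
qed

lemma reach_prob_recovered_ge:
  assumes mdp: "is_mdp P" and hum: "is_strategy \<sigma>h"
    and feasible: "nlp_feasible P sI B \<sigma>h \<beta> x xB \<delta>"
  shows "\<beta> \<le> reach_prob P B (recovered P B \<sigma>h x) sI"
proof -
  have x_nonneg: "\<forall>s\<in>S_r P B. \<forall>a. 0 \<le> x s a"
    using feasible by (simp add: nlp_feasible_def)
  have "(\<Sum>t\<in>B. xB t) \<le> reach_prob P B (recovered P B \<sigma>h x) sI"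
  proof (rule flow_into_B_le_reach_prob[where y = "\<lambda>s. \<Sum>a\<in>UNIV. x s a"])
    show "is_strategy (recovered P B \<sigma>h x)"
      by (rule recovered_strategy[OF hum x_nonneg])
  next
    fix t assume "t \<in> S_r P B"
    then show "(\<Sum>a\<in>UNIV. x t a) = (\<Sum>s\<in>S_r P B.
        induced P (recovered P B \<sigma>h x) s t * (\<Sum>a\<in>UNIV. x s a)) + (if t = sI then 1 else 0)"
      using feasible inflow_eq_induced_recovered[OF x_nonneg] by (simp add: nlp_feasible_def)
  next
    fix t assume "t \<in> B"
    then show "xB t = (\<Sum>s\<in>S_r P B.
        induced P (recovered P B \<sigma>h x) s t * (\<Sum>a\<in>UNIV. x s a)) + (if t = sI then 1 else 0)"
      using feasible inflow_eq_induced_recovered[OF x_nonneg] by (simp add: nlp_feasible_def)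
  qed (use mdp x_nonneg in \<open>auto simp: S_r_def intro: sum_nonneg\<close>)
  moreover have "\<beta> \<le> (\<Sum>t\<in>B. xB t)"
    using feasible unfolding nlp_feasible_def by blast
  ultimately show ?thesis
    by linarith
qed

lemma nlp_feasible_sound:
  assumes "is_mdp P" "is_strategy \<sigma>h" "nlp_feasible P sI B \<sigma>h \<beta> x xB \<delta>"
  shows "is_strategy (recovered P B \<sigma>h x)
    \<and> reach_prob P B (recovered P B \<sigma>h x) sI \<ge> \<beta>
    \<and> deviation \<sigma>h (recovered P B \<sigma>h x) \<le> \<delta>"
proof (intro conjI)
  show "is_strategy (recovered P B \<sigma>h x)"
    using assms by (intro recovered_strategy) (auto simp: nlp_feasible_def)
qed (use reach_prob_recovered_ge[OF assms] deviation_recovered_le[OF assms(3)] in auto)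

section \<open>Occupation measures of substochastic matrices\<close>

fun trans_within :: "('s::finite \<Rightarrow> 's \<Rightarrow> real) \<Rightarrow> 's set \<Rightarrow> nat \<Rightarrow> 's \<Rightarrow> 's \<Rightarrow> real" where
  "trans_within M T 0 s u = of_bool (s = u)"
| "trans_within M T (Suc n) s u = (\<Sum>t\<in>T. M s t * trans_within M T n t u)"

definition stay_within :: "('s::finite \<Rightarrow> 's \<Rightarrow> real) \<Rightarrow> 's set \<Rightarrow> nat \<Rightarrow> 's \<Rightarrow> real" where
  "stay_within M T n s = (\<Sum>u\<in>T. trans_within M T n s u)"

(* For s in T: the expected number of visits to u, the start included, before the chain first
   leaves T.  For M = induced P sigma and T = S_r these are the paper's x(u). *)
definition occupation :: "('s::finite \<Rightarrow> 's \<Rightarrow> real) \<Rightarrow> 's set \<Rightarrow> 's \<Rightarrow> 's \<Rightarrow> real" where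
  "occupation M T s u = (\<Sum>n. trans_within M T n s u)"

lemma trans_within_nonneg: "(\<And>s t. 0 \<le> M s t) \<Longrightarrow> 0 \<le> trans_within M T n s u"
  by (induction n arbitrary: s) (auto intro!: sum_nonneg mult_nonneg_nonneg)

lemma trans_within_add:
  assumes "s \<in> T"
  shows "trans_within M T (n + m) s u = (\<Sum>t\<in>T. trans_within M T n s t * trans_within M T m t u)"
  using assms
proof (induction n arbitrary: s)
  case 0
  then show ?case by simp
next
  case (Suc n)
  have "trans_within M T (Suc n + m) s u
      = (\<Sum>t'\<in>T. \<Sum>t\<in>T. M s t' * (trans_within M T n t' t * trans_within M T m t u))"
    by (simp add: Suc.IH sum_distrib_left)
  also have "\<dots> = (\<Sum>t\<in>T. trans_within M T (Suc n) s t * trans_within M T m t u)"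
    by (subst sum.swap) (simp add: sum_distrib_right mult.assoc)
  finally show ?case .
qed

lemma trans_within_Suc_right:
  assumes "s \<in> T" "u \<in> T"
  shows "trans_within M T (Suc n) s u = (\<Sum>t\<in>T. trans_within M T n s t * M t u)"
  using trans_within_add[OF assms(1), of M n 1 u] assms(2) by simp

lemma stay_within_Suc: "stay_within M T (Suc n) s = (\<Sum>t\<in>T. M s t * stay_within M T n t)"
  unfolding stay_within_def trans_within.simps sum_distrib_left by (rule sum.swap)

lemma stay_within_add:
  assumes "s \<in> T"
  shows "stay_within M T (n + m) s = (\<Sum>t\<in>T. trans_within M T n s t * stay_within M T m t)"
  unfolding stay_within_def trans_within_add[OF assms] sum_distrib_left by (rule sum.swap)

lemma stay_within_nonneg: "(\<And>s t. 0 \<le> M s t) \<Longrightarrow> 0 \<le> stay_within M T n s"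
  unfolding stay_within_def by (intro sum_nonneg trans_within_nonneg)

lemma stay_within_le_one:
  assumes nonneg: "\<And>s t. 0 \<le> M s t" and row: "\<And>s. (\<Sum>t\<in>T. M s t) \<le> 1"
  shows "stay_within M T n s \<le> 1"
proof (induction n arbitrary: s)
  case 0
  then show ?case by (simp add: stay_within_def of_bool_def)
next
  case (Suc n)
  have "stay_within M T (Suc n) s \<le> (\<Sum>t\<in>T. M s t)"
    unfolding stay_within_Suc
    by (intro sum_mono mult_right_le_one_le) (auto simp: nonneg Suc stay_within_nonneg)
  then show ?case
    using row[of s] by linarith
qed

lemma stay_within_antimono:
  assumes nonneg: "\<And>s t. 0 \<le> M s t" and row: "\<And>s. (\<Sum>t\<in>T. M s t) \<le> 1"
    and s: "s \<in> T" and "n \<le> m"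
  shows "stay_within M T m s \<le> stay_within M T n s"
proof (rule lift_Suc_antimono_le[of "\<lambda>n. stay_within M T n s", OF _ \<open>n \<le> m\<close>])
  fix n
  have "stay_within M T (Suc n) s = (\<Sum>t\<in>T. trans_within M T n s t * stay_within M T 1 t)"
    using stay_within_add[OF s, of M n 1] by simp
  also have "\<dots> \<le> (\<Sum>t\<in>T. trans_within M T n s t)"
    by (intro sum_mono mult_right_le_one_le trans_within_nonneg stay_within_nonneg
        stay_within_le_one nonneg row)
  finally show "stay_within M T (Suc n) s \<le> stay_within M T n s"
    by (simp add: stay_within_def)
qed

lemma stay_within_uniformly_lt_one:
  assumes nonneg: "\<And>s t. 0 \<le> M s t" and row: "\<And>s. (\<Sum>t\<in>T. M s t) \<le> 1"
    and leave: "\<And>s. s \<in> T \<Longrightarrow> \<exists>n. stay_within M T n s < 1"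
  obtains N \<rho> where "0 < N" "\<rho> < 1" "\<And>s. s \<in> T \<Longrightarrow> stay_within M T N s \<le> \<rho>"
proof -
  obtain n where n: "\<forall>s\<in>T. stay_within M T (n s) s < 1"
    using bchoice[of T "\<lambda>s n. stay_within M T n s < 1"] leave by blast
  define N where "N = Max (insert 1 (n ` T))"
  define \<rho> where "\<rho> = Max (insert 0 ((\<lambda>s. stay_within M T N s) ` T))"
  have "stay_within M T N s < 1" if "s \<in> T" for s
  proof -
    have "n s \<le> N"
      using that by (simp add: N_def)
    then show ?thesis
      using stay_within_antimono[where M = M, OF nonneg row that] n that by (meson order_le_less_trans)
  qed
  then have "\<rho> < 1"
    by (simp add: \<rho>_def)
  moreover have "0 < N"
    by (simp add: N_def Max_gr_iff)
  ultimately show thesis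
    using that[of N \<rho>] by (simp add: \<rho>_def)
qed

lemma stay_within_partial_sums_le:
  assumes nonneg: "\<And>s t. 0 \<le> M s t" and row: "\<And>s. (\<Sum>t\<in>T. M s t) \<le> 1"
    and N: "0 < N" and \<rho>: "\<rho> < 1" "\<And>s. s \<in> T \<Longrightarrow> stay_within M T N s \<le> \<rho>"
    and s: "s \<in> T"
  shows "(\<Sum>n<K. stay_within M T n s) \<le> N / (1 - \<rho>)"
  using s
proof (induction K arbitrary: s rule: less_induct)
  case (less K)
  (* The first N terms contribute at most N, and after N steps at most mass rho is left in T. *)
  define C where "C = N / (1 - \<rho>)"
  have "0 \<le> \<rho>"
    using \<rho>(2)[OF less.prems] stay_within_nonneg[where M = M, OF nonneg] order_trans by blast
  then have C: "real N + \<rho> * C = C" "real N \<le> C" "0 \<le> C"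
    using \<rho>(1) by (auto simp: C_def field_simps)
  have first_N: "(\<Sum>n<k. stay_within M T n s) \<le> real k" for k s
    using sum_mono[of "{..<k}" "\<lambda>n. stay_within M T n s" "\<lambda>_. 1"] stay_within_le_one[where M = M, OF nonneg row]
    by simp
  show ?case
  proof (cases "K \<le> N")
    case True
    then show ?thesis
      using first_N[of s K] C by (simp add: C_def[symmetric])
  next
    case False
    then obtain K' where K: "K = N + K'" and "K' < K"
      using N by (metis add.commute less_add_same_cancel1 less_imp_add_positive not_le)
    have "(\<Sum>n<K. stay_within M T n s) = (\<Sum>n<N. stay_within M T n s) + (\<Sum>n<K'. stay_within M T (N + n) s)"
      unfolding K by (induction K') (simp_all add: add.assoc)
    also have "(\<Sum>n<K'. stay_within M T (N + n) s)
        = (\<Sum>t\<in>T. trans_within M T N s t * (\<Sum>n<K'. stay_within M T n t))"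
      unfolding stay_within_add[OF less.prems] sum_distrib_left by (rule sum.swap)
    also have "\<dots> \<le> (\<Sum>t\<in>T. trans_within M T N s t * C)"
      using less.IH[OF \<open>K' < K\<close>] unfolding C_def
      by (intro sum_mono mult_left_mono trans_within_nonneg nonneg) auto
    also have "\<dots> = stay_within M T N s * C"
      by (simp add: stay_within_def sum_distrib_right)
    also have "\<dots> \<le> \<rho> * C"
      by (intro mult_right_mono \<rho>(2) less.prems C)
    finally show ?thesis
      using first_N[of s N] C by (simp add: C_def[symmetric])
  qed
qed

lemma summable_trans_within:
  assumes nonneg: "\<And>s t. 0 \<le> M s t" and row: "\<And>s. (\<Sum>t\<in>T. M s t) \<le> 1"
    and leave: "\<And>s. s \<in> T \<Longrightarrow> \<exists>n. stay_within M T n s < 1"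
    and s: "s \<in> T" and u: "u \<in> T"
  shows "summable (\<lambda>n. trans_within M T n s u)"
proof -
  obtain N \<rho> where N\<rho>: "0 < N" "\<rho> < 1" "\<And>s. s \<in> T \<Longrightarrow> stay_within M T N s \<le> \<rho>"
    using stay_within_uniformly_lt_one[where M = M, OF nonneg row leave] by blast
  have "summable (\<lambda>n. stay_within M T n s)"
    using stay_within_partial_sums_le[where M = M, OF nonneg row N\<rho> s]
    by (intro summableI_nonneg_bounded stay_within_nonneg nonneg)
  moreover have "norm (trans_within M T n s u) \<le> stay_within M T n s" for n
    unfolding stay_within_def using u trans_within_nonneg[where M = M, OF nonneg]
    by (simp add: member_le_sum)
  ultimately show ?thesis
    by (rule summable_comparison_test')
qed

lemma occupation_balance:
  assumes nonneg: "\<And>s t. 0 \<le> M s t" and s: "s \<in> T" and u: "u \<in> T"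
    and summable: "\<And>t. t \<in> T \<Longrightarrow> summable (\<lambda>n. trans_within M T n s t)"
  shows "occupation M T s u = of_bool (s = u) + (\<Sum>t\<in>T. occupation M T s t * M t u)"
proof -
  have "(\<lambda>n. trans_within M T (Suc n) s u) sums (\<Sum>t\<in>T. occupation M T s t * M t u)"
    unfolding trans_within_Suc_right[OF s u] occupation_def
    by (intro sums_sum sums_mult2 summable_sums summable)
  then have "occupation M T s u - trans_within M T 0 s u = (\<Sum>t\<in>T. occupation M T s t * M t u)"
    unfolding occupation_def using suminf_split_head[OF summable[OF u]] sums_unique by metis
  then show ?thesis
    by simp
qed

lemma occupation_exit_sums:
  assumes "\<And>t. t \<in> T \<Longrightarrow> summable (\<lambda>n. trans_within M T n s t)"
  shows "(\<lambda>n. \<Sum>t\<in>T. trans_within M T n s t * E t) sums (\<Sum>t\<in>T. occupation M T s t * E t)"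
  unfolding occupation_def using assms by (intro sums_sum sums_mult2 summable_sums)

section \<open>Solutions of the program induced by strategies\<close>

lemma stay_within_plus_reach_n_le_one:
  assumes mdp: "is_mdp P" and strat: "is_strategy \<sigma>" and s: "s \<in> S_r P B"
  shows "stay_within (induced P \<sigma>) (S_r P B) n s + reach_n P B \<sigma> n s \<le> 1"
  using s
proof (induction n arbitrary: s)
  case 0
  then show ?case
    by (simp add: stay_within_def S_r_not_in_B)
next
  case (Suc n)
  let ?M = "induced P \<sigma>" and ?T = "S_r P B" and ?h = "reach_n P B \<sigma> n"
  have "stay_within ?M ?T (Suc n) s + reach_n P B \<sigma> (Suc n) s
      = (\<Sum>t\<in>?T. ?M s t * (stay_within ?M ?T n t + ?h t)) + (\<Sum>t\<in>-?T. ?M s t * ?h t)"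
    using S_r_not_in_B[OF Suc.prems]
    by (simp add: stay_within_Suc sum_UNIV_split_Compl[of _ ?T] sum.distrib distrib_left)
  also have "\<dots> \<le> (\<Sum>t\<in>?T. ?M s t) + (\<Sum>t\<in>-?T. ?M s t)"
    by (intro add_mono sum_mono mult_right_le_one_le)
       (auto simp: Suc.IH induced_nonneg[OF mdp strat] reach_n_bounds[OF mdp strat]
         stay_within_nonneg)
  also have "\<dots> = 1"
    using induced_sum_UNIV[OF mdp strat, of s] sum_UNIV_split_Compl[of "?M s" ?T] by simp
  finally show ?case .
qed

lemma exists_stay_within_S_r_lt_one:
  assumes mdp: "is_mdp P" and strat: "is_strategy \<sigma>"
    and s: "s \<in> S_r P B" and pos: "0 < reach_prob P B \<sigma> s"
  shows "\<exists>n. stay_within (induced P \<sigma>) (S_r P B) n s < 1"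
proof -
  obtain n where "reach_n P B \<sigma> n s \<noteq> 0"
    using pos reach_prob_eq_0_iff[OF mdp strat] by force
  then have "0 < reach_n P B \<sigma> n s"
    using reach_n_bounds[OF mdp strat, of B n s] by linarith
  then show ?thesis
    using stay_within_plus_reach_n_le_one[OF mdp strat s, of n] by (intro exI[of _ n]) linarith
qed

(* Decomposition by the last step k < n spent in S_r before entering B. *)
lemma reach_n_eq_sum_trans_within:
  assumes mdp: "is_mdp P" and strat: "is_strategy \<sigma>" and s: "s \<in> S_r P B"
  shows "reach_n P B \<sigma> n s = (\<Sum>k<n. \<Sum>t\<in>S_r P B.
    trans_within (induced P \<sigma>) (S_r P B) k s t * (\<Sum>b\<in>B. induced P \<sigma> t b))"
  using s
proof (induction n arbitrary: s)
  case 0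
  then show ?case
    by (simp add: S_r_not_in_B)
next
  case (Suc n)
  let ?M = "induced P \<sigma>" and ?T = "S_r P B" and ?h = "reach_n P B \<sigma> n"
  let ?exit = "\<lambda>t. \<Sum>b\<in>B. ?M t b"
  let ?f = "\<lambda>k. \<Sum>t\<in>?T. trans_within ?M ?T k s t * ?exit t"
  have "(\<Sum>t\<in>-?T. ?M s t * ?h t) = (\<Sum>t\<in>-?T. if t \<in> B then ?M s t else 0)"
    by (intro sum.cong refl) (auto simp: reach_n_in_B reach_n_outside_S_r[OF mdp strat])
  also have "\<dots> = (\<Sum>t\<in>-?T \<inter> B. ?M s t)"
    by (simp add: sum.inter_restrict)
  also have "-?T \<inter> B = B"
    by (auto simp: S_r_def)
  finally have outside: "(\<Sum>t\<in>-?T. ?M s t * ?h t) = ?f 0"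
    using Suc.prems by simp
  have inside: "(\<Sum>t\<in>?T. ?M s t * ?h t) = (\<Sum>k<n. ?f (Suc k))"
  proof -
    have "(\<Sum>t\<in>?T. ?M s t * ?h t)
        = (\<Sum>t\<in>?T. \<Sum>k<n. \<Sum>u\<in>?T. ?M s t * (trans_within ?M ?T k t u * ?exit u))"
      by (simp add: Suc.IH sum_distrib_left)
    also have "\<dots> = (\<Sum>k<n. \<Sum>t\<in>?T. \<Sum>u\<in>?T. ?M s t * (trans_within ?M ?T k t u * ?exit u))"
      by (rule sum.swap)
    also have "\<dots> = (\<Sum>k<n. \<Sum>u\<in>?T. \<Sum>t\<in>?T. ?M s t * (trans_within ?M ?T k t u * ?exit u))"
      by (intro sum.cong refl sum.swap)
    also have "\<dots> = (\<Sum>k<n. ?f (Suc k))"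
      by (simp add: sum_distrib_right mult.assoc)
    finally show ?thesis .
  qed
  have "reach_n P B \<sigma> (Suc n) s = (\<Sum>t\<in>?T. ?M s t * ?h t) + (\<Sum>t\<in>-?T. ?M s t * ?h t)"
    using S_r_not_in_B[OF Suc.prems] by (simp add: sum_UNIV_split_Compl[of _ ?T])
  also have "\<dots> = (\<Sum>k<Suc n. ?f k)"
    unfolding inside outside sum.lessThan_Suc_shift by simp
  finally show ?case .
qed

lemma reach_prob_eq_occupation_exit:
  assumes mdp: "is_mdp P" and strat: "is_strategy \<sigma>" and sI: "sI \<in> S_r P B"
    and summable: "\<And>u. u \<in> S_r P B \<Longrightarrow> summable (\<lambda>n. trans_within (induced P \<sigma>) (S_r P B) n sI u)"
  shows "reach_prob P B \<sigma> sI
    = (\<Sum>t\<in>S_r P B. occupation (induced P \<sigma>) (S_r P B) sI t * (\<Sum>b\<in>B. induced P \<sigma> t b))"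
proof -
  let ?M = "induced P \<sigma>" and ?T = "S_r P B"
  define f where "f k = (\<Sum>t\<in>?T. trans_within ?M ?T k sI t * (\<Sum>b\<in>B. ?M t b))" for k
  have "f sums (\<Sum>t\<in>?T. occupation ?M ?T sI t * (\<Sum>b\<in>B. ?M t b))"
    unfolding f_def by (rule occupation_exit_sums[OF summable])
  moreover have "0 \<le> f k" for k
    unfolding f_def
    by (intro sum_nonneg mult_nonneg_nonneg trans_within_nonneg induced_nonneg[OF mdp strat])
  ultimately have "(\<Sum>t\<in>?T. occupation ?M ?T sI t * (\<Sum>b\<in>B. ?M t b)) = (SUP n. \<Sum>k<n. f k)"
    by (metis sums_summable sums_unique suminf_eq_SUP_real)
  also have "\<dots> = reach_prob P B \<sigma> sI"
    unfolding reach_prob_def f_def by (simp add: reach_n_eq_sum_trans_within[OF mdp strat sI])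
  finally show ?thesis ..
qed

lemma abs_scaled_strategy_le_deviation:
  assumes "is_strategy \<sigma>" "0 \<le> c"
  shows "\<bar>c * \<sigma> s a - (\<Sum>a'\<in>UNIV. c * \<sigma> s a') * \<sigma>h s a\<bar>
    \<le> deviation \<sigma>h \<sigma> * (\<Sum>a'\<in>UNIV. c * \<sigma> s a')"
proof -
  have "(\<Sum>a'\<in>UNIV. c * \<sigma> s a') = c"
    using assms(1) by (simp add: is_strategy_def sum_distrib_left[symmetric])
  moreover have "\<bar>c * \<sigma> s a - c * \<sigma>h s a\<bar> = c * \<bar>\<sigma>h s a - \<sigma> s a\<bar>"
    using assms(2) by (simp add: abs_mult abs_minus_commute right_diff_distrib[symmetric])
  ultimately show ?thesis
    using abs_diff_le_deviation[of \<sigma>h s a \<sigma>] assms(2) by (simp add: mult.commute mult_left_mono)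
qed

lemma summable_trans_within_S_r:
  assumes mdp: "is_mdp P" and strat: "is_strategy \<sigma>"
    and pos: "\<And>s. s \<in> S_r P B \<Longrightarrow> 0 < reach_prob P B \<sigma> s"
    and "s \<in> S_r P B" "u \<in> S_r P B"
  shows "summable (\<lambda>n. trans_within (induced P \<sigma>) (S_r P B) n s u)"
  using summable_trans_within[OF induced_nonneg[OF mdp strat] induced_sum_le_one[OF mdp strat]
      exists_stay_within_S_r_lt_one[OF mdp strat _ pos]] assms(4,5) by blast

lemma inflow_scaled_strategy:
  "inflow P B sI (\<lambda>s a. y s * \<sigma> s a) t
    = (\<Sum>s\<in>S_r P B. y s * induced P \<sigma> s t) + (if t = sI then 1 else 0)"
  unfolding inflow_def induced_def by (simp add: sum_distrib_left mult_ac)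

lemma nlp_feasible_of_strategy_from_S_r:
  assumes mdp: "is_mdp P" and hum: "is_strategy \<sigma>h" and strat: "is_strategy \<sigma>"
    and pos: "\<And>s. s \<in> S_r P B \<Longrightarrow> 0 < reach_prob P B \<sigma> s"
    and beta: "\<beta> \<le> reach_prob P B \<sigma> sI" and sI: "sI \<in> S_r P B"
  shows "\<exists>x xB. nlp_feasible P sI B \<sigma>h \<beta> x xB (deviation \<sigma>h \<sigma>)"
proof -
  let ?M = "induced P \<sigma>" and ?T = "S_r P B"
  define y where "y s = (if s \<in> ?T then occupation ?M ?T sI s else 0)" for s
  define x where "x s a = y s * \<sigma> s a" for s a
  define xB where "xB = inflow P B sI x"
  note summable = summable_trans_within_S_r[OF mdp strat pos sI]
  have y_nonneg: "0 \<le> y s" for s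
    unfolding y_def occupation_def
    by (auto intro!: suminf_nonneg trans_within_nonneg induced_nonneg[OF mdp strat] summable)
  have x_nonneg: "0 \<le> x s a" for s a
    using y_nonneg strat by (simp add: x_def is_strategy_def)
  have sum_x: "(\<Sum>a\<in>UNIV. x s a) = y s" for s
    using strat by (simp add: x_def is_strategy_def sum_distrib_left[symmetric])
  have inflow_x: "inflow P B sI x t = (\<Sum>s\<in>?T. y s * ?M s t) + (if t = sI then 1 else 0)" for t
    using inflow_scaled_strategy[of P B sI y \<sigma> t] by (simp add: x_def[abs_def])
  have flow_S: "(\<Sum>a\<in>UNIV. x t a) = inflow P B sI x t" if "t \<in> ?T" for t
    unfolding sum_x inflow_x
    using occupation_balance[OF induced_nonneg[OF mdp strat] sI that summable] that
    by (simp add: y_def eq_commute[of sI] mult.commute cong: sum.cong)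
  have xB_eq: "xB t = (\<Sum>s\<in>?T. y s * ?M s t)" if "t \<in> B" for t
    using that sI S_r_not_in_B by (auto simp: xB_def inflow_x)
  have xB_nonneg: "0 \<le> xB t" if "t \<in> B" for t
    unfolding xB_eq[OF that]
    by (intro sum_nonneg mult_nonneg_nonneg y_nonneg induced_nonneg[OF mdp strat])
  have sum_xB: "(\<Sum>t\<in>B. xB t) = reach_prob P B \<sigma> sI"
  proof -
    have "(\<Sum>t\<in>B. xB t) = (\<Sum>s\<in>?T. y s * (\<Sum>t\<in>B. ?M s t))"
      by (simp add: xB_eq sum_distrib_left sum.swap[of _ B])
    also have "\<dots> = reach_prob P B \<sigma> sI"
      by (simp add: reach_prob_eq_occupation_exit[OF mdp strat sI summable] y_def)
    finally show ?thesis .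
  qed
  have xB_le_one: "xB t \<le> 1" if "t \<in> B" for t
    using member_le_sum[of t B xB] xB_nonneg that sum_xB reach_prob_bounds[OF mdp strat, of B sI]
    by fastforce
  have deviation: "\<bar>x s a - (\<Sum>a'\<in>UNIV. x s a') * \<sigma>h s a\<bar> \<le> deviation \<sigma>h \<sigma> * (\<Sum>a'\<in>UNIV. x s a')"
    for s a
    unfolding x_def using abs_scaled_strategy_le_deviation[OF strat y_nonneg]
    by (simp add: mult.commute)
  have "nlp_feasible P sI B \<sigma>h \<beta> x xB (deviation \<sigma>h \<sigma>)"
    unfolding nlp_feasible_def
    using deviation_bounds[OF hum strat] x_nonneg xB_nonneg xB_le_one flow_S[symmetric] deviation
      beta[folded sum_xB] by (simp add: xB_def)
  then show ?thesis
    by blast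
qed

lemma nlp_feasible_of_strategy_outside_S_r:
  assumes mdp: "is_mdp P" and hum: "is_strategy \<sigma>h" and strat: "is_strategy \<sigma>"
    and beta: "\<beta> \<le> reach_prob P B \<sigma> sI" and sI: "sI \<notin> S_r P B"
  shows "\<exists>x xB. nlp_feasible P sI B \<sigma>h \<beta> x xB (deviation \<sigma>h \<sigma>)"
proof -
  define xB where "xB s = (if s = sI then 1 else 0 :: real)" for s
  have "\<beta> \<le> (\<Sum>s\<in>B. xB s)"
  proof (cases "sI \<in> B")
    case True
    then show ?thesis
      using beta reach_prob_bounds[OF mdp strat, of B sI] by (simp add: xB_def)
  next
    case False
    then have "reach_prob P B \<sigma> sI = 0"
      using sI strat reach_prob_bounds[OF mdp strat, of B sI] by (auto simp: S_r_def)
    then show ?thesis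
      using beta False by (simp add: xB_def)
  qed
  then have "nlp_feasible P sI B \<sigma>h \<beta> (\<lambda>_ _. 0) xB (deviation \<sigma>h \<sigma>)"
    using deviation_bounds[OF hum strat] sI by (auto simp: nlp_feasible_def inflow_def xB_def)
  then show ?thesis
    by blast
qed

lemma nlp_feasible_near_strategy:
  assumes mdp: "is_mdp P" and hum: "is_strategy \<sigma>h" and strat: "is_strategy \<sigma>"
    and beta: "\<beta> \<le> reach_prob P B \<sigma> sI" and \<epsilon>: "0 < \<epsilon>"
  shows "\<exists>\<delta> x xB. nlp_feasible P sI B \<sigma>h \<beta> x xB \<delta> \<and> \<delta> \<le> deviation \<sigma>h \<sigma> + \<epsilon>"
proof -
  obtain \<sigma>' where strat': "is_strategy \<sigma>'" and close: "\<And>s a. \<bar>\<sigma>' s a - \<sigma> s a\<bar> \<le> min \<epsilon> 1"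
    and reach: "reach_prob P B \<sigma> sI \<le> reach_prob P B \<sigma>' sI"
    and pos: "\<And>s. s \<in> S_r P B \<Longrightarrow> 0 < reach_prob P B \<sigma>' s"
    by (rule exists_close_strategy_reaching_from_S_r[where \<epsilon> = "min \<epsilon> 1", OF mdp strat])
       (use \<epsilon> in auto)
  have beta': "\<beta> \<le> reach_prob P B \<sigma>' sI"
    using beta reach by linarith
  have "\<exists>x xB. nlp_feasible P sI B \<sigma>h \<beta> x xB (deviation \<sigma>h \<sigma>')"
    using nlp_feasible_of_strategy_from_S_r[OF mdp hum strat' pos beta']
      nlp_feasible_of_strategy_outside_S_r[OF mdp hum strat' beta'] by blast
  moreover have "deviation \<sigma>h \<sigma>' \<le> deviation \<sigma>h \<sigma> + \<epsilon>"
    using deviation_le_add[of \<sigma>' \<sigma> "min \<epsilon> 1" \<sigma>h, OF close] by linarith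
  ultimately show ?thesis
    by blast
qed

theorem lemma2:
  fixes P :: "'s::finite \<Rightarrow> 'a::finite \<Rightarrow> 's \<Rightarrow> real"
    and sI :: 's and B :: "'s set" and \<sigma>h :: "'s \<Rightarrow> 'a \<Rightarrow> real" and \<beta> :: real
  assumes mdp: "is_mdp P"
    and absorbing: "\<forall>s\<in>B. \<forall>a. P s a s = 1"
    and reachable: "\<forall>s. (sI, s) \<in> {(u, v). \<exists>a. 0 < P u a v}\<^sup>*"
    and hum: "is_strategy \<sigma>h"
    and beta: "0 \<le> \<beta>" "\<beta> \<le> 1"
    and exists: "\<exists>\<sigma>. is_strategy \<sigma> \<and> reach_prob P B \<sigma> sI \<ge> \<beta>"
  shows "Inf ((\<lambda>\<sigma>. deviation \<sigma>h \<sigma>) ` {\<sigma>. is_strategy \<sigma> \<and> reach_prob P B \<sigma> sI \<ge> \<beta>})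
           = Inf {\<delta>. \<exists>x xB. nlp_feasible P sI B \<sigma>h \<beta> x xB \<delta>}
         \<and> (\<forall>x xB \<delta>. nlp_feasible P sI B \<sigma>h \<beta> x xB \<delta> \<longrightarrow>
           is_strategy (recovered P B \<sigma>h x)
           \<and> reach_prob P B (recovered P B \<sigma>h x) sI \<ge> \<beta>
           \<and> deviation \<sigma>h (recovered P B \<sigma>h x) \<le> \<delta>)"
proof
  show sound: "\<forall>x xB \<delta>. nlp_feasible P sI B \<sigma>h \<beta> x xB \<delta> \<longrightarrow>
      is_strategy (recovered P B \<sigma>h x)
      \<and> reach_prob P B (recovered P B \<sigma>h x) sI \<ge> \<beta>
      \<and> deviation \<sigma>h (recovered P B \<sigma>h x) \<le> \<delta>"
    using nlp_feasible_sound[OF mdp hum] by blast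
  show "Inf ((\<lambda>\<sigma>. deviation \<sigma>h \<sigma>) ` {\<sigma>. is_strategy \<sigma> \<and> reach_prob P B \<sigma> sI \<ge> \<beta>})
      = Inf {\<delta>. \<exists>x xB. nlp_feasible P sI B \<sigma>h \<beta> x xB \<delta>}"
  proof (rule Inf_eq_if_mutually_approximating)
    show "bdd_below ((\<lambda>\<sigma>. deviation \<sigma>h \<sigma>) ` {\<sigma>. is_strategy \<sigma> \<and> reach_prob P B \<sigma> sI \<ge> \<beta>})"
      using deviation_bounds[OF hum] by (auto intro: bdd_belowI[of _ 0])
    show "bdd_below {\<delta>. \<exists>x xB. nlp_feasible P sI B \<sigma>h \<beta> x xB \<delta>}"
      by (auto simp: nlp_feasible_def intro: bdd_belowI[of _ 0])
  qed (use exists nlp_feasible_near_strategy[OF mdp hum] sound in fastforce)+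
qed

end
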